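(* Let $V$ be a vector space over $\Bbbk$ of dimension $m\geq 2$, and write $W=V^*\otimes V$. The following data are given in $\mathtt{Rep}\,\operatorname{GL}(V)$. - The inclusion $\iota:\operatorname{PS}^m(W)\to W^{\otimes m}$. - The map $\mathrm{ev}^{\otimes m}:W^{\otimes m}\to\mathds{1}$ defined by $\alpha_1\otimes v_1\otimes\cdots\otimes\alpha_m\otimes v_m\mapsto\prod_i\alpha_i(v_i)$. - The inclusion $\kappa:\operatorname{PE}^m(V^* )\otimes V^{\otimes m}\oplus (V^* )^{\otimes m}\otimes\operatorname{PE}^m(V)\to(V^* )^{\otimes m}\otimes V^{\otimes m}$. - The map $\pi:(V^* )^{\otimes m}\otimes V^{\otimes m}\to\mathds{1}$ defined as the projection onto $\bigwedge^mV^*\otimes\bigwedge^mV$ followed by the isomorphism $\alpha_1\wedge\cdots\wedge\alpha_m\otimes v_1\wedge\cdots\wedge v_m\mapsto\sum_{\sigma\in S_m}(-1)^{|\sigma|}\prod_i\alpha_i(v_{\sigma(i)})$. Then there exist morphisms of $\operatorname{GL}(V)$-modules $$\varphi:\operatorname{PE}^m(V^* )\otimes V^{\otimes m}\oplus (V^* )^{\otimes m}\otimes\operatorname{PE}^m(V)\to\operatorname{PS}^m(W),\qquad \psi:(V^* )^{\otimes m}\otimes V^{\otimes m}\to W^{\otimes m}$$ such that $\iota\circ\varphi=\psi\circ\kappa$ and $\mathrm{ev}^{\otimes m}\circ\psi=\pi$.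
   Context: $\Bbbk$ is an algebraically closed field of characteristic $p>2$. For an object $X$ of a symmetric monoidal $\Bbbk$-linear category, $\operatorname{S}^jX$ and $\bigwedge^jX$ denote the largest quotients of $X^{\otimes j}$ on which $S_j$ (acting via the braiding) acts trivially, respectively by the sign. Since $p\neq 2$, $X^{\otimes 2}=\operatorname{S}^2X\oplus\bigwedge^2X$. The parity of a permutation $\sigma$ is written $|\sigma|$. Define $$\operatorname{PS}^j(X)=\bigoplus_{i=0}^{j-2}X^{\otimes i}\otimes\textstyle\bigwedge^2X\otimes X^{\otimes(j-i-2)},\qquad \operatorname{PE}^j(X)=\bigoplus_{i=0}^{j-2}X^{\otimes i}\otimes\operatorname{S}^2X\otimes X^{\otimes(j-i-2)}.$$ Each comes with a map to $X^{\otimes j}$ given by the inclusions of direct summands of $X^{\otimes j}$. This gives exact sequences $\operatorname{PS}^j(X)\to X^{\otimes j}\to\operatorname{S}^jX\to 0$ and $\operatorname{PE}^j(X)\to X^{\otimes j}\to\bigwedge^jX\to0$. *)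

theory Defs
  imports "HOL-Library.FuncSet" "HOL-Combinatorics.Combinatorics"
    "HOL-Computational_Algebra.Polynomial"
begin

definition alg_closed_field :: "'k::field itself \<Rightarrow> bool" where
  "alg_closed_field _ \<longleftrightarrow> (\<forall>q::'k poly. degree q > 0 \<longrightarrow> (\<exists>x. poly q x = 0))"

text \<open>V = k^m with standard basis e_0..e_(m-1), dual basis on V^*.
  An element of (V^*)^(tensor m) tensor V^(tensor m) (equivalently of W^(tensor m),
  W = V^* tensor V, with W-position l carrying the pair of indices (a l, b l))
  is given by its coefficient function t (a,b), a,b ranging over index tuples.\<close>

type_synonym 'k tensor = "(nat \<Rightarrow> nat) \<times> (nat \<Rightarrow> nat) \<Rightarrow> 'k"

definition Idx :: "nat \<Rightarrow> ((nat \<Rightarrow> nat) \<times> (nat \<Rightarrow> nat)) set" where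
  "Idx m = ({..<m} \<rightarrow>\<^sub>E {..<m}) \<times> ({..<m} \<rightarrow>\<^sub>E {..<m})"

definition Tens :: "nat \<Rightarrow> 'k::field tensor set" where
  "Tens m = {t. \<forall>x. x \<notin> Idx m \<longrightarrow> t x = 0}"

definition tadd :: "'k::field tensor \<Rightarrow> 'k tensor \<Rightarrow> 'k tensor" where
  "tadd s t = (\<lambda>x. s x + t x)"

definition tsc :: "'k::field \<Rightarrow> 'k tensor \<Rightarrow> 'k tensor" where
  "tsc c t = (\<lambda>x. c * t x)"

text \<open>(g,h) is a pair of mutually inverse m x m matrices, i.e. g in GL(V), h = g^-1.\<close>
definition invpair :: "nat \<Rightarrow> (nat \<Rightarrow> nat \<Rightarrow> 'k::field) \<Rightarrow> (nat \<Rightarrow> nat \<Rightarrow> 'k) \<Rightarrow> bool" where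
  "invpair m g h \<longleftrightarrow> (\<forall>i<m. \<forall>j<m.
      (\<Sum>k<m. g i k * h k j) = (if i = j then 1 else 0) \<and>
      (\<Sum>k<m. h i k * g k j) = (if i = j then 1 else 0))"

text \<open>Action of g (with inverse h) on tensors: g acts on V by the matrix g,
  and on V^* contragrediently (alpha maps to alpha composed with g^-1).\<close>
definition act :: "nat \<Rightarrow> (nat \<Rightarrow> nat \<Rightarrow> 'k::field) \<Rightarrow> (nat \<Rightarrow> nat \<Rightarrow> 'k) \<Rightarrow> 'k tensor \<Rightarrow> 'k tensor" where
  "act m g h t = (\<lambda>(a, b). if (a, b) \<in> Idx m then
      (\<Sum>(a', b') \<in> Idx m. (\<Prod>l<m. h (a' l) (a l)) * (\<Prod>l<m. g (b l) (b' l)) * t (a', b'))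
    else 0)"

definition swp :: "nat \<Rightarrow> (nat \<Rightarrow> nat) \<Rightarrow> (nat \<Rightarrow> nat)" where
  "swp i a = a \<circ> transpose i (Suc i)"

text \<open>W^i tensor Lambda^2 W tensor W^(m-i-2), as the (-1)-eigenspace of the swap
  of W-factors i, i+1 inside W^(tensor m).\<close>
definition SW :: "nat \<Rightarrow> nat \<Rightarrow> 'k::field tensor set" where
  "SW m i = {t \<in> Tens m. \<forall>a b. t (swp i a, swp i b) = - t (a, b)}"

text \<open>(V^*)^i tensor S^2 V^* tensor (V^*)^(m-i-2) tensor V^(tensor m).\<close>
definition EL :: "nat \<Rightarrow> nat \<Rightarrow> 'k::field tensor set" where
  "EL m i = {t \<in> Tens m. \<forall>a b. t (swp i a, b) = t (a, b)}"

text \<open>(V^*)^(tensor m) tensor V^i tensor S^2 V tensor V^(m-i-2).\<close>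
definition ER :: "nat \<Rightarrow> nat \<Rightarrow> 'k::field tensor set" where
  "ER m i = {t \<in> Tens m. \<forall>a b. t (a, swp i b) = t (a, b)}"

text \<open>PS^m(W): families indexed by i = 0..m-2.\<close>
definition PSc :: "nat \<Rightarrow> (nat \<Rightarrow> 'k::field tensor) set" where
  "PSc m = {F. (\<forall>i < m - 1. F i \<in> SW m i) \<and> (\<forall>i \<ge> m - 1. F i = (\<lambda>_. 0))}"

text \<open>PE^m(V^*) tensor V^(tensor m) (+) (V^*)^(tensor m) tensor PE^m(V).\<close>
definition PEc :: "nat \<Rightarrow> ((nat \<Rightarrow> 'k::field tensor) \<times> (nat \<Rightarrow> 'k tensor)) set" where
  "PEc m = {(F, G). (\<forall>i < m - 1. F i \<in> EL m i \<and> G i \<in> ER m i) \<and>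
                    (\<forall>i \<ge> m - 1. F i = (\<lambda>_. 0) \<and> G i = (\<lambda>_. 0))}"

definition fadd :: "(nat \<Rightarrow> 'k::field tensor) \<Rightarrow> (nat \<Rightarrow> 'k tensor) \<Rightarrow> (nat \<Rightarrow> 'k tensor)" where
  "fadd F G = (\<lambda>i. tadd (F i) (G i))"
definition fsc :: "'k::field \<Rightarrow> (nat \<Rightarrow> 'k tensor) \<Rightarrow> (nat \<Rightarrow> 'k tensor)" where
  "fsc c F = (\<lambda>i. tsc c (F i))"
definition fam_act :: "nat \<Rightarrow> (nat \<Rightarrow> nat \<Rightarrow> 'k::field) \<Rightarrow> (nat \<Rightarrow> nat \<Rightarrow> 'k) \<Rightarrow> (nat \<Rightarrow> 'k tensor) \<Rightarrow> (nat \<Rightarrow> 'k tensor)" where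
  "fam_act m g h F = (\<lambda>i. act m g h (F i))"

definition padd where "padd x y = (fadd (fst x) (fst y), fadd (snd x) (snd y))"
definition psc where "psc c x = (fsc c (fst x), fsc c (snd x))"
definition pact where "pact m g h x = (fam_act m g h (fst x), fam_act m g h (snd x))"

definition iota :: "nat \<Rightarrow> (nat \<Rightarrow> 'k::field tensor) \<Rightarrow> 'k tensor" where
  "iota m F = (\<lambda>x. \<Sum>i < m - 1. F i x)"

definition kappa :: "nat \<Rightarrow> (nat \<Rightarrow> 'k::field tensor) \<times> (nat \<Rightarrow> 'k tensor) \<Rightarrow> 'k tensor" where
  "kappa m x = (\<lambda>y. \<Sum>i < m - 1. fst x i y + snd x i y)"

text \<open>ev^(tensor m) on W^(tensor m): e*_(a l) tensor e_(b l) evaluates to [a l = b l].\<close>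
definition evm :: "nat \<Rightarrow> 'k::field tensor \<Rightarrow> 'k" where
  "evm m t = (\<Sum>(a, b) \<in> Idx m. t (a, b) * (\<Prod>l<m. if a l = b l then 1 else 0))"

definition pim :: "nat \<Rightarrow> 'k::field tensor \<Rightarrow> 'k" where
  "pim m t = (\<Sum>(a, b) \<in> Idx m. t (a, b) *
      (\<Sum>\<sigma> \<in> {\<sigma>. \<sigma> permutes {..<m}}. of_int (sign \<sigma>) *
          (\<Prod>i<m. if a i = b (\<sigma> i) then 1 else 0)))"

definition phi_hom :: "nat \<Rightarrow> ((nat \<Rightarrow> 'k::field tensor) \<times> (nat \<Rightarrow> 'k tensor) \<Rightarrow> (nat \<Rightarrow> 'k tensor)) \<Rightarrow> bool" where
  "phi_hom m \<phi> \<longleftrightarrow>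
     (\<forall>x \<in> PEc m. \<phi> x \<in> PSc m) \<and>
     (\<forall>x \<in> PEc m. \<forall>y \<in> PEc m. \<phi> (padd x y) = fadd (\<phi> x) (\<phi> y)) \<and>
     (\<forall>c. \<forall>x \<in> PEc m. \<phi> (psc c x) = fsc c (\<phi> x)) \<and>
     (\<forall>g h. invpair m g h \<longrightarrow> (\<forall>x \<in> PEc m. \<phi> (pact m g h x) = fam_act m g h (\<phi> x)))"

definition psi_hom :: "nat \<Rightarrow> ('k::field tensor \<Rightarrow> 'k tensor) \<Rightarrow> bool" where
  "psi_hom m \<psi> \<longleftrightarrow>
     (\<forall>t \<in> Tens m. \<psi> t \<in> Tens m) \<and>
     (\<forall>s \<in> Tens m. \<forall>t \<in> Tens m. \<psi> (tadd s t) = tadd (\<psi> s) (\<psi> t)) \<and>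
     (\<forall>c. \<forall>t \<in> Tens m. \<psi> (tsc c t) = tsc c (\<psi> t)) \<and>
     (\<forall>g h. invpair m g h \<longrightarrow> (\<forall>t \<in> Tens m. \<psi> (act m g h t) = act m g h (\<psi> t)))"

end

theory Submission
  imports Defs
begin

text \<open>Take \<open>\<psi> = id \<otimes> Alt\<close>, antisymmetrising the \<open>m\<close> vector factors:
  \<open>\<psi>(t)(a, b) = \<Sum>\<^sub>\<sigma> sgn \<sigma> \<cdot> t(a, b \<circ> \<sigma>)\<close>. It commutes with \<open>GL(V)\<close> because
  \<open>GL(V)\<close> acts diagonally on \<open>V\<^sup>\<otimes>\<^sup>m\<close>, hence commutes with permutations of the factors.
  Since \<open>2 \<noteq> 0\<close>, \<open>Alt\<close> kills every summand of \<open>(V\<^sup>*)\<^sup>\<otimes>\<^sup>m \<otimes> PE\<^sup>m(V)\<close>; and a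
  tensor symmetric in the covector factors \<open>i, i+1\<close> becomes, after \<open>Alt\<close>,
  antisymmetric under the simultaneous swap of both pairs of factors, i.e. under the swap of
  the \<open>W\<close>-factors \<open>i, i+1\<close>. So \<open>\<phi>\<close> is \<open>\<psi>\<close> on the first component of
  \<open>PE\<^sup>m(V\<^sup>*) \<otimes> V\<^sup>\<otimes>\<^sup>m \<oplus> (V\<^sup>*)\<^sup>\<otimes>\<^sup>m \<otimes> PE\<^sup>m(V)\<close> and zero on the second.
  Finally \<open>ev\<^sup>\<otimes>\<^sup>m \<circ> \<psi>\<close> picks the diagonal \<open>a = b\<close>, which after reindexing by
  \<open>\<sigma> \<mapsto> \<sigma>\<inverse>\<close> is \<open>\<pi>\<close>.\<close>

lemma two_neq_zero_if_CHAR_gt_2: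
  assumes "CHAR('a::semiring_1) > 2"
  shows "(2::'a) \<noteq> 0"
proof
  assume "(2::'a) = 0"
  then have "CHAR('a) dvd 2"
    using of_nat_eq_0_iff_char_dvd[of 2, where 'a='a] by simp
  with assms show False
    using dvd_imp_le by fastforce
qed

lemma sum_sign_permutes_compose_left:
  fixes f :: "('b \<Rightarrow> 'b) \<Rightarrow> 'a::comm_ring_1"
  assumes "finite S" "\<tau> permutes S"
  shows "(\<Sum>\<sigma> | \<sigma> permutes S. of_int (sign \<sigma>) * f (\<tau> \<circ> \<sigma>))
       = of_int (sign \<tau>) * (\<Sum>\<sigma> | \<sigma> permutes S. of_int (sign \<sigma>) * f \<sigma>)"
proof -
  have "(\<Sum>\<sigma> | \<sigma> permutes S. of_int (sign \<sigma>) * f \<sigma>)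
      = (\<Sum>\<sigma> | \<sigma> permutes S. of_int (sign (\<tau> \<circ> \<sigma>)) * f (\<tau> \<circ> \<sigma>))"
    by (rule setum_permutations_compose_left[OF assms(2)])
  also have "\<dots> = of_int (sign \<tau>) * (\<Sum>\<sigma> | \<sigma> permutes S. of_int (sign \<sigma>) * f (\<tau> \<circ> \<sigma>))"
    using assms by (simp add: sign_compose permutes_imp_permutation sum_distrib_left mult.assoc)
  finally show ?thesis
    by (simp flip: mult.assoc of_int_mult)
qed

lemma sum_sign_permutes_compose_right:
  fixes f :: "('b \<Rightarrow> 'b) \<Rightarrow> 'a::comm_ring_1"
  assumes "finite S" "\<tau> permutes S"
  shows "(\<Sum>\<sigma> | \<sigma> permutes S. of_int (sign \<sigma>) * f (\<sigma> \<circ> \<tau>))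
       = of_int (sign \<tau>) * (\<Sum>\<sigma> | \<sigma> permutes S. of_int (sign \<sigma>) * f \<sigma>)"
proof -
  have "(\<Sum>\<sigma> | \<sigma> permutes S. of_int (sign \<sigma>) * f \<sigma>)
      = (\<Sum>\<sigma> | \<sigma> permutes S. of_int (sign (\<sigma> \<circ> \<tau>)) * f (\<sigma> \<circ> \<tau>))"
    by (rule sum_permutations_compose_right[OF assms(2)])
  also have "\<dots> = of_int (sign \<tau>) * (\<Sum>\<sigma> | \<sigma> permutes S. of_int (sign \<sigma>) * f (\<sigma> \<circ> \<tau>))"
    using assms by (simp add: sign_compose permutes_imp_permutation sum_distrib_left mult_ac)
  finally show ?thesis
    by (simp flip: mult.assoc of_int_mult)
qed

lemma bij_betw_comp_permutes_PiE:
  assumes "\<sigma> permutes A"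
  shows "bij_betw (\<lambda>f. f \<circ> \<sigma>) (A \<rightarrow>\<^sub>E B) (A \<rightarrow>\<^sub>E B)"
proof (rule bij_betw_byWitness[where f' = "\<lambda>f. f \<circ> inv \<sigma>"])
  have comp_PiE: "f \<circ> \<rho> \<in> A \<rightarrow>\<^sub>E B" if "\<rho> permutes A" "f \<in> A \<rightarrow>\<^sub>E B" for f \<rho>
    using that by (auto simp: PiE_iff extensional_def permutes_in_image permutes_not_in)
  show "(\<lambda>f. f \<circ> \<sigma>) ` (A \<rightarrow>\<^sub>E B) \<subseteq> A \<rightarrow>\<^sub>E B" "(\<lambda>f. f \<circ> inv \<sigma>) ` (A \<rightarrow>\<^sub>E B) \<subseteq> A \<rightarrow>\<^sub>E B"
    using comp_PiE assms permutes_inv by blast+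
  show "\<forall>f \<in> A \<rightarrow>\<^sub>E B. f \<circ> \<sigma> \<circ> inv \<sigma> = f" "\<forall>f \<in> A \<rightarrow>\<^sub>E B. f \<circ> inv \<sigma> \<circ> \<sigma> = f"
    using permutes_inv_o[OF assms] by (simp_all add: comp_assoc)
qed

lemma prod_indicator_eq_PiE:
  assumes "finite A" "a \<in> A \<rightarrow>\<^sub>E B" "c \<in> A \<rightarrow>\<^sub>E B"
  shows "(\<Prod>l\<in>A. if a l = c l then 1 else 0) = (if a = c then 1 else (0::'a::comm_semiring_1))"
proof (cases "a = c")
  case False
  then obtain l where "l \<in> A" "a l \<noteq> c l"
    using assms(2,3) PiE_ext by blast
  with False assms(1) show ?thesis
    by (auto intro!: prod_zero)
qed simp

lemma Idx_comp_permutes_iff: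
  assumes "\<sigma> permutes {..<m}"
  shows "(a, b \<circ> \<sigma>) \<in> Idx m \<longleftrightarrow> (a, b) \<in> Idx m"
proof -
  have "b \<circ> \<sigma> \<circ> inv \<sigma> = b"
    using permutes_inv_o[OF assms] by (simp add: comp_assoc)
  then show ?thesis
    unfolding Idx_def mem_Sigma_iff
    using bij_betw_apply[OF bij_betw_comp_permutes_PiE[OF assms]]
      bij_betw_apply[OF bij_betw_comp_permutes_PiE[OF permutes_inv[OF assms]], of "b \<circ> \<sigma>"]
    by metis
qed

definition alt_vectors :: "nat \<Rightarrow> 'k::field tensor \<Rightarrow> 'k tensor" where
  "alt_vectors m t = (\<lambda>(a, b). \<Sum>\<sigma> | \<sigma> permutes {..<m}. of_int (sign \<sigma>) * t (a, b \<circ> \<sigma>))"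

lemma alt_vectors_Tens: "t \<in> Tens m \<Longrightarrow> alt_vectors m t \<in> Tens m"
  by (auto simp: Tens_def alt_vectors_def Idx_comp_permutes_iff)

lemma alt_vectors_sum:
  "alt_vectors m (\<lambda>x. \<Sum>i\<in>I. f i x) = (\<lambda>x. \<Sum>i\<in>I. alt_vectors m (f i) x)"
  unfolding alt_vectors_def by (auto simp: sum_distrib_left intro: sum.swap)

lemma alt_vectors_add: "alt_vectors m (tadd s t) = tadd (alt_vectors m s) (alt_vectors m t)"
  by (auto simp: alt_vectors_def tadd_def sum.distrib algebra_simps)

lemma alt_vectors_scale: "alt_vectors m (tsc c t) = tsc c (alt_vectors m t)"
  by (auto simp: alt_vectors_def tsc_def sum_distrib_left algebra_simps)

lemma alt_vectors_zero: "alt_vectors m (\<lambda>_. 0) = (\<lambda>_. 0)"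
  by (auto simp: alt_vectors_def)

lemma transpose_Suc_permutes: "i < m - 1 \<Longrightarrow> transpose i (Suc i) permutes {..<m}"
  by (rule permutes_swap_id) auto

lemma alt_vectors_EL:
  assumes "t \<in> EL m i" "i < m - 1"
  shows "alt_vectors m t \<in> SW m i"
proof -
  let ?\<tau> = "transpose i (Suc i)"
  have "alt_vectors m t (swp i a, swp i b) = - alt_vectors m t (a, b)" for a b
  proof -
    have "alt_vectors m t (swp i a, swp i b)
        = (\<Sum>\<sigma> | \<sigma> permutes {..<m}. of_int (sign \<sigma>) * t (a, b \<circ> (?\<tau> \<circ> \<sigma>)))"
      using assms(1) by (simp add: alt_vectors_def EL_def swp_def comp_assoc)
    also have "\<dots> = of_int (sign ?\<tau>) * alt_vectors m t (a, b)"
      using sum_sign_permutes_compose_left[OF _ transpose_Suc_permutes[OF assms(2)],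
          of "\<lambda>\<sigma>. t (a, b \<circ> \<sigma>)"]
      by (simp add: alt_vectors_def)
    finally show ?thesis
      by (simp add: sign_swap_id)
  qed
  with assms(1) show ?thesis
    by (simp add: SW_def EL_def alt_vectors_Tens)
qed

lemma alt_vectors_ER:
  assumes "t \<in> ER m i" "i < m - 1" "(2::'k::field) \<noteq> 0"
  shows "alt_vectors m (t :: 'k tensor) = (\<lambda>_. 0)"
proof -
  let ?\<tau> = "transpose i (Suc i)"
  have "alt_vectors m t (a, b) = 0" for a b
  proof -
    have "alt_vectors m t (a, b)
        = (\<Sum>\<sigma> | \<sigma> permutes {..<m}. of_int (sign \<sigma>) * t (a, b \<circ> (\<sigma> \<circ> ?\<tau>)))"
      using assms(1) by (simp add: alt_vectors_def ER_def swp_def o_assoc)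
    also have "\<dots> = - alt_vectors m t (a, b)"
      using sum_sign_permutes_compose_right[OF _ transpose_Suc_permutes[OF assms(2)],
          of "\<lambda>\<sigma>. t (a, b \<circ> \<sigma>)"]
      by (simp add: alt_vectors_def sign_swap_id)
    finally have "2 * alt_vectors m t (a, b) = 0"
      by simp
    with assms(3) show ?thesis
      by simp
  qed
  then show ?thesis
    by auto
qed

lemma sum_Idx: "(\<Sum>(a, b)\<in>Idx m. f a b) = (\<Sum>a\<in>{..<m} \<rightarrow>\<^sub>E {..<m}. \<Sum>b\<in>{..<m} \<rightarrow>\<^sub>E {..<m}. f a b)"
  by (simp add: Idx_def sum.cartesian_product)

lemma act_lincomb:
  "act m g h (\<lambda>x. \<Sum>i\<in>I. c i * f i x) = (\<lambda>x. \<Sum>i\<in>I. c i * act m g h (f i) x)"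
  unfolding act_def
  by (rule ext) (auto simp: sum_distrib_left mult_ac split_def sum.swap[of _ I])

lemma act_comp_snd_permutes:
  assumes \<sigma>: "\<sigma> permutes {..<m}"
  shows "act m g h (\<lambda>(a, b). t (a, b \<circ> \<sigma>)) (a, b) = act m g h t (a, b \<circ> \<sigma>)"
proof (cases "(a, b) \<in> Idx m")
  case True
  let ?E = "{..<m} \<rightarrow>\<^sub>E {..<m}"
  let ?G = "\<lambda>b c. \<Prod>l<m. g (b l) (c l)"
  have "(\<Sum>c\<in>?E. ?G b c * t (a', c \<circ> \<sigma>)) = (\<Sum>c\<in>?E. ?G (b \<circ> \<sigma>) c * t (a', c))" for a'
  proof -
    have "?G b c = ?G (b \<circ> \<sigma>) (c \<circ> \<sigma>)" for c
      using prod.permute[OF \<sigma>, of "\<lambda>l. g (b l) (c l)"] by (simp add: comp_def)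
    then have "(\<Sum>c\<in>?E. ?G b c * t (a', c \<circ> \<sigma>)) = (\<Sum>c\<in>?E. ?G (b \<circ> \<sigma>) (c \<circ> \<sigma>) * t (a', c \<circ> \<sigma>))"
      by simp
    also have "\<dots> = (\<Sum>c\<in>?E. ?G (b \<circ> \<sigma>) c * t (a', c))"
      by (rule sum.reindex_bij_betw[OF bij_betw_comp_permutes_PiE[OF \<sigma>]])
    finally show ?thesis .
  qed
  with True show ?thesis
    by (simp add: act_def sum_Idx Idx_comp_permutes_iff[OF \<sigma>] mult.assoc flip: sum_distrib_left)
qed (simp add: act_def Idx_comp_permutes_iff[OF assms])

lemma act_alt_vectors: "act m g h (alt_vectors m t) = alt_vectors m (act m g h t)"
proof (rule ext, clarify)
  fix a b
  let ?P = "{\<sigma>. \<sigma> permutes {..<m}}"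
  have "alt_vectors m t = (\<lambda>x. \<Sum>\<sigma>\<in>?P. of_int (sign \<sigma>) * (\<lambda>(a, b). t (a, b \<circ> \<sigma>)) x)"
    by (auto simp: alt_vectors_def)
  then have "act m g h (alt_vectors m t) (a, b)
      = (\<Sum>\<sigma>\<in>?P. of_int (sign \<sigma>) * act m g h (\<lambda>(a, b). t (a, b \<circ> \<sigma>)) (a, b))"
    by (simp add: act_lincomb)
  also have "\<dots> = (\<Sum>\<sigma>\<in>?P. of_int (sign \<sigma>) * act m g h t (a, b \<circ> \<sigma>))"
    by (simp add: act_comp_snd_permutes)
  finally show "act m g h (alt_vectors m t) (a, b) = alt_vectors m (act m g h t) (a, b)"
    by (simp add: alt_vectors_def)
qed

lemma evm_eq_sum_diagonal: "evm m t = (\<Sum>a\<in>{..<m} \<rightarrow>\<^sub>E {..<m}. t (a, a))"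
proof -
  let ?E = "{..<m} \<rightarrow>\<^sub>E {..<m}"
  have "evm m t = (\<Sum>a\<in>?E. \<Sum>b\<in>?E. t (a, b) * (if a = b then 1 else 0))"
    by (simp add: evm_def sum_Idx prod_indicator_eq_PiE cong: sum.cong)
  also have "\<dots> = (\<Sum>a\<in>?E. t (a, a))"
    by (intro sum.cong refl) (simp add: if_distrib[of "\<lambda>x. _ * x"] sum.delta finite_PiE cong: if_cong)
  finally show ?thesis .
qed

lemma pim_eq_sum_permutes:
  "pim m t = (\<Sum>\<sigma> | \<sigma> permutes {..<m}. of_int (sign \<sigma>) * (\<Sum>a\<in>{..<m} \<rightarrow>\<^sub>E {..<m}. t (a, a \<circ> \<sigma>)))"
proof -
  let ?E = "{..<m} \<rightarrow>\<^sub>E {..<m}"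
  let ?P = "{\<sigma>. \<sigma> permutes {..<m}}"
  have indicator: "(\<Prod>l<m. if a l = b (\<sigma> l) then 1 else 0) = (if b = a \<circ> inv \<sigma> then 1 else (0::'a))"
    if "a \<in> ?E" "b \<in> ?E" "\<sigma> permutes {..<m}" for a b \<sigma>
  proof -
    have "a = b \<circ> \<sigma> \<longleftrightarrow> b = a \<circ> inv \<sigma>"
      using permutes_inv_o[OF that(3)] by (auto simp flip: o_assoc)
    then show ?thesis
      using prod_indicator_eq_PiE[OF finite_lessThan that(1)
          bij_betw_apply[OF bij_betw_comp_permutes_PiE[OF that(3)] that(2)]]
      by (simp only: o_apply)
  qed
  have "pim m t = (\<Sum>a\<in>?E. \<Sum>b\<in>?E. \<Sum>\<sigma>\<in>?P. of_int (sign \<sigma>) * (t (a, b) * (if b = a \<circ> inv \<sigma> then 1 else 0)))"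
    unfolding pim_def sum_Idx sum_distrib_left
    by (intro sum.cong refl) (simp add: indicator mult.left_commute)
  also have "\<dots> = (\<Sum>\<sigma>\<in>?P. of_int (sign \<sigma>) * (\<Sum>a\<in>?E. \<Sum>b\<in>?E. t (a, b) * (if b = a \<circ> inv \<sigma> then 1 else 0)))"
    by (simp add: sum_distrib_left sum.swap[of _ ?E ?P])
  also have "\<dots> = (\<Sum>\<sigma>\<in>?P. of_int (sign (inv \<sigma>)) * (\<Sum>a\<in>?E. t (a, a \<circ> inv \<sigma>)))"
  proof (intro sum.cong refl arg_cong2[where f = "(*)"])
    fix \<sigma> assume "\<sigma> \<in> ?P"
    then have \<sigma>: "\<sigma> permutes {..<m}" by simp
    then show "of_int (sign \<sigma>) = of_int (sign (inv \<sigma>))"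
      by (simp add: sign_inverse permutes_imp_permutation[OF finite_lessThan])
    fix a assume "a \<in> ?E"
    then have "a \<circ> inv \<sigma> \<in> ?E"
      by (rule bij_betw_apply[OF bij_betw_comp_permutes_PiE[OF permutes_inv[OF \<sigma>]]])
    then show "(\<Sum>b\<in>?E. t (a, b) * (if b = a \<circ> inv \<sigma> then 1 else 0)) = t (a, a \<circ> inv \<sigma>)"
      by (simp add: if_distrib[of "\<lambda>x. _ * x"] sum.delta' finite_PiE cong: if_cong)
  qed
  also have "\<dots> = (\<Sum>\<sigma>\<in>?P. of_int (sign \<sigma>) * (\<Sum>a\<in>?E. t (a, a \<circ> \<sigma>)))"
    by (rule sum_permutations_inverse[symmetric])
  finally show ?thesis .
qed

lemma evm_alt_vectors: "evm m (alt_vectors m t) = pim m t"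
  by (simp add: evm_eq_sum_diagonal pim_eq_sum_permutes alt_vectors_def sum_distrib_left
      sum.swap[of _ "{..<m} \<rightarrow>\<^sub>E {..<m}" "{\<sigma>. \<sigma> permutes {..<m}}"])

theorem lemma2p2:
  fixes m :: nat
  assumes "alg_closed_field TYPE('k::field)"
    and "CHAR('k) > 2"
    and "m \<ge> 2"
  shows "\<exists>(\<phi> :: (nat \<Rightarrow> 'k tensor) \<times> (nat \<Rightarrow> 'k tensor) \<Rightarrow> (nat \<Rightarrow> 'k tensor))
           (\<psi> :: 'k tensor \<Rightarrow> 'k tensor).
           phi_hom m \<phi> \<and> psi_hom m \<psi> \<and>
           (\<forall>x \<in> PEc m. iota m (\<phi> x) = \<psi> (kappa m x)) \<and>
           (\<forall>t \<in> Tens m. evm m (\<psi> t) = pim m t)"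
proof -
  have two: "(2::'k) \<noteq> 0"
    using assms(2) by (rule two_neq_zero_if_CHAR_gt_2)
  define \<phi> :: "(nat \<Rightarrow> 'k tensor) \<times> (nat \<Rightarrow> 'k tensor) \<Rightarrow> (nat \<Rightarrow> 'k tensor)"
    where "\<phi> x = (\<lambda>i. alt_vectors m (fst x i))" for x
  have "phi_hom m \<phi>"
    unfolding phi_hom_def PSc_def PEc_def \<phi>_def
    by (auto simp: alt_vectors_EL alt_vectors_zero alt_vectors_add alt_vectors_scale act_alt_vectors
        padd_def fadd_def psc_def fsc_def pact_def fam_act_def)
  moreover have "psi_hom m (alt_vectors m)"
    unfolding psi_hom_def
    by (simp add: alt_vectors_Tens alt_vectors_add alt_vectors_scale act_alt_vectors)
  moreover have "iota m (\<phi> x) = alt_vectors m (kappa m x)" if "x \<in> PEc m" for x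
  proof -
    have snd_vanishes: "alt_vectors m (snd x i) y = 0" if "i < m - 1" for i y
      using \<open>x \<in> PEc m\<close> alt_vectors_ER[OF _ that two] that by (auto simp: PEc_def)
    have "alt_vectors m (kappa m x) = (\<lambda>y. \<Sum>i<m - 1. alt_vectors m (fst x i) y + alt_vectors m (snd x i) y)"
      by (simp add: kappa_def alt_vectors_sum alt_vectors_add[unfolded tadd_def])
    also have "\<dots> = iota m (\<phi> x)"
      by (simp add: iota_def \<phi>_def snd_vanishes)
    finally show ?thesis ..
  qed
  ultimately show ?thesis
    by (blast intro: evm_alt_vectors)
qed

end
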